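(* Let $G\in\mathcal{C}$ and let $N,N'$ be distinct normal subgroups of $G$. If $(H,H,\vartheta)\in\mathcal{L}_N$ and $(H',H',\vartheta')\in\mathcal{L}_{N'}$, then the Shoda pairs $(H,\ker\vartheta)$ and $(H',\ker\vartheta')$ of $G$ are not equivalent, i.e. they do not realize the same primitive central idempotent of $\mathbb{Q}G$.
   Context: All groups are finite. $\mathcal{C}$ is the class of finite groups $G$ such that every subgroup and quotient group of $G$ is either abelian or contains a non-central abelian normal subgroup. $\psi^x(g)=\psi(xgx^{-1})$, $\psi^G$ induced character, $1_N$ trivial character. A Shoda pair of $G$ is $(H,K)$ with $K\unlhd H\le G$, $H/K$ cyclic, and $g\in G$, $[H,g]\cap H\subseteq K$ imply $g\in H$; it realizes the primitive central idempotent $e_{\mathbb{Q}}(\psi^G)$ where $\psi$ is a linear character of $H$ with kernel $K$ and $e_{\mathbb{Q}}(\chi)=\frac{\chi(1)}{|G|}\sum_{\sigma\in\operatorname{Gal}(\mathbb{Q}(\chi)/\mathbb{Q})}\sum_{g\in G}\sigma(\chi(g))g^{-1}$. An $N$-linear character triple of $G$ is $(H,A,\vartheta)$ with $H\le G$, $A\unlhd H$, $\vartheta$ a linear character of $A$ invariant in $H$, and $\ker(\vartheta^G)=N$. For $B\unlhd M\le G$ and linear $\lambda$ on $B$, $\widetilde{\operatorname{Lin}}(M|\lambda)$ is the set of linear characters of $M$ whose restriction to $B$ contains $\lambda$ and whose induction to $G$ has kernel $N$. For each triple a normal subgroup $\mathcal{A}=\mathcal{A}_{(H,A,\vartheta)}$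 of $H$ is fixed, of maximal order among normal subgroups of $H$ containing $\ker\vartheta$ with abelian quotient by $\ker\vartheta$. $\operatorname{Aut}(\mathbb{C}|\vartheta)\times H$ acts on $\widetilde{\operatorname{Lin}}(\mathcal{A}|\vartheta)$ by $(\sigma,h)\cdot\varphi=\sigma\circ\varphi^h$ ($\sigma$ a field automorphism of $\mathbb{C}$ fixing $\mathbb{Q}(\vartheta)$); fix orbit representatives $\mathfrak{Lin}(\mathcal{A}|\vartheta)$. If $H\neq A$, $Cl(H,A,\vartheta)=\{(I_H(\varphi),\mathcal{A},\varphi):\varphi\in\mathfrak{Lin}(\mathcal{A}|\vartheta)\}$, $I_H(\varphi)=\{h\in H:\varphi^h=\varphi\}$; if $H=A$, empty. $\mathcal{G}_N$ is the directed graph of $N$-linear triples reachable from $(G,N,1_N)$, with edges $(u,v)$ whenever $v\in Cl(u)$. $\mathcal{L}_N$ is the set of vertices of $\mathcal{G}_N$ of the form $(H,H,\vartheta)$; for these $(H,\ker\vartheta)$ is a Shoda pair of $G$. *)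

theory Defs
  imports Complex_Main "HOL-Algebra.Coset" "HOL-Library.FuncSet"
begin

definition ab_or_nc_abnormal :: "('b, 'c) monoid_scheme \<Rightarrow> bool" where
  "ab_or_nc_abnormal X \<longleftrightarrow> comm_group X \<or>
     (\<exists>A. normal A X \<and> (\<forall>a\<in>A. \<forall>b\<in>A. a \<otimes>\<^bsub>X\<^esub> b = b \<otimes>\<^bsub>X\<^esub> a)
          \<and> (\<exists>a\<in>A. \<exists>x\<in>carrier X. a \<otimes>\<^bsub>X\<^esub> x \<noteq> x \<otimes>\<^bsub>X\<^esub> a))"

definition class_C :: "'a monoid \<Rightarrow> bool" where
  "class_C G \<longleftrightarrow>
     (\<forall>K. subgroup K G \<longrightarrow> ab_or_nc_abnormal (G\<lparr>carrier := K\<rparr>)) \<and>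
     (\<forall>M. normal M G \<longrightarrow> ab_or_nc_abnormal (G Mod M))"

section \<open>Characters (functions on the group, zero outside their domain)\<close>

definition linear_char :: "'a monoid \<Rightarrow> 'a set \<Rightarrow> ('a \<Rightarrow> complex) \<Rightarrow> bool" where
  "linear_char G A \<theta> \<longleftrightarrow>
     (\<forall>x\<in>A. \<forall>y\<in>A. \<theta> (x \<otimes>\<^bsub>G\<^esub> y) = \<theta> x * \<theta> y) \<and>
     (\<forall>x\<in>A. \<theta> x \<noteq> 0) \<and> (\<forall>x. x \<notin> A \<longrightarrow> \<theta> x = 0)"

definition lin_ker :: "'a set \<Rightarrow> ('a \<Rightarrow> complex) \<Rightarrow> 'a set" where
  "lin_ker A \<theta> = {a\<in>A. \<theta> a = 1}"

text \<open>Induced class function psi^G, psi being zero outside H.\<close>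
definition induced :: "'a monoid \<Rightarrow> 'a set \<Rightarrow> ('a \<Rightarrow> complex) \<Rightarrow> 'a \<Rightarrow> complex" where
  "induced G H \<psi> g = (if g \<in> carrier G then
      (1 / of_nat (card H)) * (\<Sum>x\<in>carrier G. \<psi> (x \<otimes>\<^bsub>G\<^esub> g \<otimes>\<^bsub>G\<^esub> inv\<^bsub>G\<^esub> x)) else 0)"

definition char_ker :: "'a monoid \<Rightarrow> ('a \<Rightarrow> complex) \<Rightarrow> 'a set" where
  "char_ker G \<chi> = {g\<in>carrier G. \<chi> g = \<chi> \<one>\<^bsub>G\<^esub>}"

definition one_char :: "'a set \<Rightarrow> 'a \<Rightarrow> complex" where
  "one_char N = (\<lambda>x. if x \<in> N then 1 else 0)"

definition is_subfield :: "complex set \<Rightarrow> bool" where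
  "is_subfield F \<longleftrightarrow> 0 \<in> F \<and> 1 \<in> F \<and>
     (\<forall>x\<in>F. \<forall>y\<in>F. x + y \<in> F \<and> x - y \<in> F \<and> x * y \<in> F) \<and> (\<forall>x\<in>F. inverse x \<in> F)"

definition gen_field :: "complex set \<Rightarrow> complex set" where
  "gen_field S = \<Inter>{F. is_subfield F \<and> S \<subseteq> F}"

definition field_aut :: "complex set \<Rightarrow> (complex \<Rightarrow> complex) \<Rightarrow> bool" where
  "field_aut F \<sigma> \<longleftrightarrow> \<sigma> \<in> extensional F \<and> bij_betw \<sigma> F F \<and> \<sigma> 1 = 1 \<and>
     (\<forall>x\<in>F. \<forall>y\<in>F. \<sigma> (x + y) = \<sigma> x + \<sigma> y \<and> \<sigma> (x * y) = \<sigma> x * \<sigma> y)"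

definition char_gal :: "'a monoid \<Rightarrow> ('a \<Rightarrow> complex) \<Rightarrow> (complex \<Rightarrow> complex) set" where
  "char_gal G \<chi> = {\<sigma>. field_aut (gen_field (\<chi> ` carrier G)) \<sigma>}"

text \<open>e_Q(chi) as an element of QG, i.e. its coefficient function on G
  (the coefficient of h is the summand with g^{-1} = h, i.e. g = h^{-1}).\<close>
definition eQ :: "'a monoid \<Rightarrow> ('a \<Rightarrow> complex) \<Rightarrow> 'a \<Rightarrow> complex" where
  "eQ G \<chi> = (\<lambda>h. if h \<in> carrier G then
      \<chi> \<one>\<^bsub>G\<^esub> / of_nat (card (carrier G)) *
        (\<Sum>\<sigma>\<in>char_gal G \<chi>. \<sigma> (\<chi> (inv\<^bsub>G\<^esub> h))) else 0)"

type_synonym 'a triple = "'a set \<times> 'a set \<times> ('a \<Rightarrow> complex)"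

definition lin_triple :: "'a monoid \<Rightarrow> 'a triple \<Rightarrow> bool" where
  "lin_triple G t = (case t of (H, A, \<theta>) \<Rightarrow>
     subgroup H G \<and> normal A (G\<lparr>carrier := H\<rparr>) \<and> linear_char G A \<theta> \<and>
     (\<forall>h\<in>H. \<forall>a\<in>A. \<theta> (h \<otimes>\<^bsub>G\<^esub> a \<otimes>\<^bsub>G\<^esub> inv\<^bsub>G\<^esub> h) = \<theta> a))"

definition N_lin_triple :: "'a monoid \<Rightarrow> 'a set \<Rightarrow> 'a triple \<Rightarrow> bool" where
  "N_lin_triple G N t \<longleftrightarrow> lin_triple G t \<and>
     (case t of (H, A, \<theta>) \<Rightarrow> char_ker G (induced G A \<theta>) = N)"

definition A_cand :: "'a monoid \<Rightarrow> 'a triple \<Rightarrow> 'a set \<Rightarrow> bool" where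
  "A_cand G t K = (case t of (H, A, \<theta>) \<Rightarrow>
     normal K (G\<lparr>carrier := H\<rparr>) \<and> lin_ker A \<theta> \<subseteq> K \<and>
     comm_group ((G\<lparr>carrier := K\<rparr>) Mod (lin_ker A \<theta>)))"

text \<open>Acal is an admissible choice of \<A>_t for every linear triple t: a candidate of maximal order.\<close>
definition Acal_ok :: "'a monoid \<Rightarrow> ('a triple \<Rightarrow> 'a set) \<Rightarrow> bool" where
  "Acal_ok G Acal \<longleftrightarrow> (\<forall>t. lin_triple G t \<longrightarrow>
     A_cand G t (Acal t) \<and> (\<forall>K. A_cand G t K \<longrightarrow> card K \<le> card (Acal t)))"

definition Lin_tilde :: "'a monoid \<Rightarrow> ('a triple \<Rightarrow> 'a set) \<Rightarrow> 'a triple \<Rightarrow> ('a \<Rightarrow> complex) set" where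
  "Lin_tilde G Acal t = (case t of (H, A, \<theta>) \<Rightarrow>
     {\<phi>. linear_char G (Acal t) \<phi> \<and> (\<forall>a\<in>A. \<phi> a = \<theta> a) \<and>
          char_ker G (induced G (Acal t) \<phi>) = char_ker G (induced G A \<theta>)})"

text \<open>psi is in the orbit of phi under Aut(C|theta) x H, acting by (sigma,h).phi = sigma o phi^h,
  where phi^h(g) = phi(h g h^{-1}).\<close>
definition orbit_rel :: "'a monoid \<Rightarrow> ('a triple \<Rightarrow> 'a set) \<Rightarrow> 'a triple \<Rightarrow>
    ('a \<Rightarrow> complex) \<Rightarrow> ('a \<Rightarrow> complex) \<Rightarrow> bool" where
  "orbit_rel G Acal t \<phi> \<psi> = (case t of (H, A, \<theta>) \<Rightarrow>
     \<exists>\<sigma> h. field_aut UNIV \<sigma> \<and> (\<forall>z\<in>gen_field (\<theta> ` A). \<sigma> z = z) \<and> h \<in> H \<and>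
        (\<forall>a\<in>Acal t. \<psi> a = \<sigma> (\<phi> (h \<otimes>\<^bsub>G\<^esub> a \<otimes>\<^bsub>G\<^esub> inv\<^bsub>G\<^esub> h))))"

text \<open>Rep t is a fixed set of orbit representatives \<frak>Lin(\<A>|theta).\<close>
definition Rep_ok :: "'a monoid \<Rightarrow> ('a triple \<Rightarrow> 'a set) \<Rightarrow> ('a triple \<Rightarrow> ('a \<Rightarrow> complex) set) \<Rightarrow> bool" where
  "Rep_ok G Acal Rep \<longleftrightarrow> (\<forall>t. lin_triple G t \<longrightarrow>
     Rep t \<subseteq> Lin_tilde G Acal t \<and>
     (\<forall>\<phi>\<in>Lin_tilde G Acal t. \<exists>!\<rho>. \<rho> \<in> Rep t \<and> orbit_rel G Acal t \<rho> \<phi>))"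

definition stab :: "'a monoid \<Rightarrow> 'a set \<Rightarrow> 'a set \<Rightarrow> ('a \<Rightarrow> complex) \<Rightarrow> 'a set" where
  "stab G H M \<phi> = {h\<in>H. \<forall>a\<in>M. \<phi> (h \<otimes>\<^bsub>G\<^esub> a \<otimes>\<^bsub>G\<^esub> inv\<^bsub>G\<^esub> h) = \<phi> a}"

definition Cl :: "'a monoid \<Rightarrow> ('a triple \<Rightarrow> 'a set) \<Rightarrow> ('a triple \<Rightarrow> ('a \<Rightarrow> complex) set) \<Rightarrow>
    'a triple \<Rightarrow> 'a triple set" where
  "Cl G Acal Rep t = (case t of (H, A, \<theta>) \<Rightarrow>
     if H = A then {} else (\<lambda>\<phi>. (stab G H (Acal t) \<phi>, Acal t, \<phi>)) ` Rep t)"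

inductive_set graph_vertices :: "'a monoid \<Rightarrow> ('a triple \<Rightarrow> 'a set) \<Rightarrow>
    ('a triple \<Rightarrow> ('a \<Rightarrow> complex) set) \<Rightarrow> 'a set \<Rightarrow> 'a triple set"
  for G Acal Rep N where
  root: "(carrier G, N, one_char N) \<in> graph_vertices G Acal Rep N"
| step: "u \<in> graph_vertices G Acal Rep N \<Longrightarrow> v \<in> Cl G Acal Rep u \<Longrightarrow> v \<in> graph_vertices G Acal Rep N"

definition L_set :: "'a monoid \<Rightarrow> ('a triple \<Rightarrow> 'a set) \<Rightarrow>
    ('a triple \<Rightarrow> ('a \<Rightarrow> complex) set) \<Rightarrow> 'a set \<Rightarrow> 'a triple set" where
  "L_set G Acal Rep N = {(H, A, \<theta>) \<in> graph_vertices G Acal Rep N. H = A}"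

text \<open>Primitive central idempotents of QG realized by the Shoda pair (H,K).\<close>
definition shoda_idem :: "'a monoid \<Rightarrow> 'a set \<Rightarrow> 'a set \<Rightarrow> ('a \<Rightarrow> complex) set" where
  "shoda_idem G H K = {eQ G (induced G H \<psi>) | \<psi>. linear_char G H \<psi> \<and> lin_ker H \<psi> = K}"

end

theory Submission
  imports Defs "HOL-Algebra.Multiplicative_Group" "Jordan_Normal_Form.Char_Poly"
begin

text \<open>
  Every vertex (H, A, \<theta>) of the graph of N satisfies ker(\<theta>^G) = N: this holds at the root and
  is preserved by Cl, whose elements \<phi> are chosen in Lin~(\<A>|\<theta>).  For a linear character \<psi> of H
  the kernel of \<psi>^G is the normal core of ker \<psi>, so it only depends on the pair (H, ker \<psi>), and
  every idempotent realized by (H, ker \<theta>) with (H, H, \<theta>) in L_N comes from a character with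
  kernel N.  Finally the kernel of a character \<chi> can be read off e_Q(\<chi>): the coefficient of g^{-1}
  is a multiple of the sum of the Galois conjugates of \<chi>(g), and each conjugate has modulus at
  most \<chi>(1), so this sum equals its value at g = 1 only if \<chi>(g) = \<chi>(1).  The bound on the
  conjugates holds because |H| \<chi>(g) is an eigenvalue of a nonnegative integer matrix with row sums
  at most |G|, and so is every conjugate.  Hence equal idempotents force N = N'.
\<close>

lemma sum_norm_bound_attained_imp_eq:
  fixes f :: "'b \<Rightarrow> complex" and d :: real
  assumes fin: "finite S" and bound: "\<And>i. i \<in> S \<Longrightarrow> cmod (f i) \<le> d"
    and sum: "sum f S = of_nat (card S) * of_real d"
  shows "\<forall>i\<in>S. f i = of_real d"
proof
  fix i assume i: "i \<in> S"
  have "Re (f j) \<le> d" if "j \<in> S" for j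
    using bound[OF that] complex_Re_le_cmod order_trans by blast
  moreover have "(\<Sum>j\<in>S. d - Re (f j)) = 0"
    using arg_cong[OF sum, of Re] by (simp add: sum_subtractf)
  ultimately have "\<forall>j\<in>S. d - Re (f j) = 0"
    using sum_nonneg_eq_0_iff[OF fin, of "\<lambda>j. d - Re (f j)"] by fastforce
  then have re: "Re (f i) = d" using i by simp
  have "(Re (f i))\<^sup>2 + (Im (f i))\<^sup>2 \<le> d\<^sup>2"
    using bound[OF i] by (simp add: cmod_power2[symmetric] power_mono)
  then have "Im (f i) = 0" using re by simp
  then show "f i = of_real d" using re by (simp add: complex_eq_iff)
qed

section \<open>Linear and induced characters\<close>

definition normal_core :: "('a, 'b) monoid_scheme \<Rightarrow> 'a set \<Rightarrow> 'a set" where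
  "normal_core G K = {g \<in> carrier G. \<forall>x\<in>carrier G. x \<otimes>\<^bsub>G\<^esub> g \<otimes>\<^bsub>G\<^esub> inv\<^bsub>G\<^esub> x \<in> K}"

locale finite_group = group G for G :: "'a monoid" (structure) +
  assumes finite_carrier: "finite (carrier G)"
begin

lemma linear_char_one:
  assumes H: "subgroup H G" and \<psi>: "linear_char G H \<psi>"
  shows "\<psi> \<one> = 1"
proof -
  have one: "\<one> \<in> H" using subgroup.one_closed[OF H] .
  then have "\<psi> \<one> = \<psi> \<one> * \<psi> \<one>"
    using \<psi> unfolding linear_char_def by (metis l_one subgroup.mem_carrier[OF H])
  moreover have "\<psi> \<one> \<noteq> 0" using \<psi> one unfolding linear_char_def by blast
  ultimately show ?thesis by (metis mult_cancel_left1)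
qed

lemma linear_char_pow:
  assumes H: "subgroup H G" and \<psi>: "linear_char G H \<psi>" and x: "x \<in> H"
  shows "x [^] (k::nat) \<in> H \<and> \<psi> (x [^] k) = \<psi> x ^ k"
proof (induction k)
  case 0
  show ?case using subgroup.one_closed[OF H] linear_char_one[OF H \<psi>] by simp
next
  case (Suc k)
  then have "x [^] Suc k \<in> H" using subgroup.m_closed[OF H _ x] by simp
  moreover have "\<psi> (x [^] k \<otimes> x) = \<psi> (x [^] k) * \<psi> x"
    using Suc x \<psi> unfolding linear_char_def by blast
  ultimately show ?case using Suc by simp
qed

lemma linear_char_norm_le_1:
  assumes H: "subgroup H G" and \<psi>: "linear_char G H \<psi>"
  shows "cmod (\<psi> x) \<le> 1"
proof (cases "x \<in> H")
  case True
  have xG: "x \<in> carrier G" using subgroup.mem_carrier[OF H True] .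
  have "\<psi> x ^ Coset.order G = 1"
    using linear_char_pow[OF H \<psi> True, of "Coset.order G"] pow_order_eq_1[OF xG]
      linear_char_one[OF H \<psi>] by simp
  then have "cmod (\<psi> x) ^ Coset.order G = 1 ^ Coset.order G" by (metis norm_one norm_power power_one)
  moreover have "Coset.order G > 0" unfolding Coset.order_def using finite_carrier xG card_gt_0_iff by blast
  ultimately show ?thesis using power_eq_imp_eq_base[of "cmod (\<psi> x)" "Coset.order G" 1] by simp
next
  case False
  then show ?thesis using \<psi> unfolding linear_char_def by simp
qed

lemma card_mult_induced:
  assumes "subgroup H G" "g \<in> carrier G"
  shows "of_nat (card H) * induced G H \<psi> g = (\<Sum>x\<in>carrier G. \<psi> (x \<otimes> g \<otimes> inv x))"
proof -
  have "card H > 0" using subgroup.finite_imp_card_positive[OF assms(1) finite_carrier] .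
  then show ?thesis using assms(2) unfolding induced_def by simp
qed

lemma card_mult_induced_one:
  assumes H: "subgroup H G" and \<psi>: "linear_char G H \<psi>"
  shows "of_nat (card H) * induced G H \<psi> \<one> = of_nat (card (carrier G))"
  using card_mult_induced[OF H one_closed, of \<psi>] linear_char_one[OF H \<psi>] by simp

lemma char_ker_induced:
  assumes H: "subgroup H G" and \<psi>: "linear_char G H \<psi>"
  shows "char_ker G (induced G H \<psi>) = normal_core G (lin_ker H \<psi>)"
proof (intro equalityI subsetI)
  fix g assume "g \<in> char_ker G (induced G H \<psi>)"
  then have g: "g \<in> carrier G" and eq: "induced G H \<psi> g = induced G H \<psi> \<one>"
    unfolding char_ker_def by auto
  have "(\<Sum>x\<in>carrier G. \<psi> (x \<otimes> g \<otimes> inv x)) = of_nat (card (carrier G)) * of_real 1"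
    using card_mult_induced[OF H g, of \<psi>] card_mult_induced_one[OF H \<psi>] eq by simp
  then have "\<forall>x\<in>carrier G. \<psi> (x \<otimes> g \<otimes> inv x) = of_real 1"
    using sum_norm_bound_attained_imp_eq[OF finite_carrier, of "\<lambda>x. \<psi> (x \<otimes> g \<otimes> inv x)" 1]
      linear_char_norm_le_1[OF H \<psi>] by blast
  moreover have "y \<in> H" if "\<psi> y = 1" for y
    using \<psi> that unfolding linear_char_def by (metis zero_neq_one)
  ultimately show "g \<in> normal_core G (lin_ker H \<psi>)"
    using g unfolding normal_core_def lin_ker_def by simp
next
  fix g assume "g \<in> normal_core G (lin_ker H \<psi>)"
  then have g: "g \<in> carrier G" and "\<forall>x\<in>carrier G. \<psi> (x \<otimes> g \<otimes> inv x) = 1"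
    unfolding normal_core_def lin_ker_def by auto
  then have "(\<Sum>x\<in>carrier G. \<psi> (x \<otimes> g \<otimes> inv x)) = of_nat (card (carrier G))" by simp
  then have "of_nat (card H) * induced G H \<psi> g = of_nat (card H) * induced G H \<psi> \<one>"
    using card_mult_induced[OF H g, of \<psi>] card_mult_induced_one[OF H \<psi>] by simp
  then show "g \<in> char_ker G (induced G H \<psi>)"
    using g subgroup.finite_imp_card_positive[OF H finite_carrier] unfolding char_ker_def by simp
qed

lemma normal_core_normal:
  assumes "normal N G"
  shows "normal_core G N = N"
proof (intro equalityI subsetI)
  fix g assume "g \<in> normal_core G N"
  then have "g \<in> carrier G" and "\<one> \<otimes> g \<otimes> inv \<one> \<in> N"
    unfolding normal_core_def using one_closed by blast+
  then show "g \<in> N" by simp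
next
  fix g assume "g \<in> N"
  then show "g \<in> normal_core G N"
    unfolding normal_core_def
    using normal.inv_op_closed2[OF assms] subgroup.mem_carrier[OF normal_imp_subgroup[OF assms]]
    by blast
qed

section \<open>Vertices of the graph are N-linear triples\<close>

lemma normal_in_subgroup_iff:
  assumes H: "subgroup H G"
  shows "normal A (G\<lparr>carrier := H\<rparr>) \<longleftrightarrow>
    subgroup A G \<and> A \<subseteq> H \<and> (\<forall>x\<in>H. \<forall>a\<in>A. x \<otimes> a \<otimes> inv x \<in> A)"
proof -
  have "normal A (G\<lparr>carrier := H\<rparr>) \<longleftrightarrow> subgroup A (G\<lparr>carrier := H\<rparr>) \<and>
     (\<forall>x\<in>carrier (G\<lparr>carrier := H\<rparr>). \<forall>h\<in>A. x \<otimes>\<^bsub>G\<lparr>carrier := H\<rparr>\<^esub> h \<otimes>\<^bsub>G\<lparr>carrier := H\<rparr>\<^esub> inv\<^bsub>G\<lparr>carrier := H\<rparr>\<^esub> x \<in> A)"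
    by (rule group.normal_inv_iff[OF subgroup_imp_group[OF H]])
  also have "\<dots> \<longleftrightarrow> subgroup A (G\<lparr>carrier := H\<rparr>) \<and> (\<forall>x\<in>H. \<forall>a\<in>A. x \<otimes> a \<otimes> inv x \<in> A)"
    using m_inv_consistent[OF H] by simp
  also have "subgroup A (G\<lparr>carrier := H\<rparr>) \<longleftrightarrow> subgroup A G \<and> A \<subseteq> H"
    using incl_subgroup[OF H] subgroup_incl[OF _ H] subgroup.subset by fastforce
  finally show ?thesis by blast
qed

lemma subgroup_stab:
  assumes H: "subgroup H G" and M: "normal M (G\<lparr>carrier := H\<rparr>)"
  shows "subgroup (stab G H M \<phi>) G"
proof -
  have MH: "M \<subseteq> H" and conj: "\<And>x a. x \<in> H \<Longrightarrow> a \<in> M \<Longrightarrow> x \<otimes> a \<otimes> inv x \<in> M"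
    using M unfolding normal_in_subgroup_iff[OF H] by auto
  have HG: "H \<subseteq> carrier G" using subgroup.subset[OF H] .
  show ?thesis
  proof (rule subgroupI)
    show "stab G H M \<phi> \<subseteq> carrier G" using HG unfolding stab_def by blast
    have "\<one> \<in> stab G H M \<phi>"
      unfolding stab_def using subgroup.one_closed[OF H] MH HG by (simp add: subset_iff)
    then show "stab G H M \<phi> \<noteq> {}" by blast
  next
    fix h assume h: "h \<in> stab G H M \<phi>"
    then have hH: "h \<in> H" and fix_h: "\<And>a. a \<in> M \<Longrightarrow> \<phi> (h \<otimes> a \<otimes> inv h) = \<phi> a"
      unfolding stab_def by auto
    have "\<phi> (inv h \<otimes> a \<otimes> inv (inv h)) = \<phi> a" if a: "a \<in> M" for a
    proof -
      have "h \<otimes> (inv h \<otimes> a \<otimes> inv (inv h)) \<otimes> inv h = a"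
        using hH a MH HG by (simp add: subset_iff m_assoc, simp add: m_assoc[symmetric])
      then show ?thesis
        using fix_h[OF conj[OF subgroup.m_inv_closed[OF H hH] a]] by simp
    qed
    then show "inv h \<in> stab G H M \<phi>"
      unfolding stab_def using subgroup.m_inv_closed[OF H hH] by blast
  next
    fix h k assume h: "h \<in> stab G H M \<phi>" and k: "k \<in> stab G H M \<phi>"
    then have hH: "h \<in> H" and kH: "k \<in> H"
      and fix_h: "\<And>a. a \<in> M \<Longrightarrow> \<phi> (h \<otimes> a \<otimes> inv h) = \<phi> a"
      and fix_k: "\<And>a. a \<in> M \<Longrightarrow> \<phi> (k \<otimes> a \<otimes> inv k) = \<phi> a"
      unfolding stab_def by auto
    have "\<phi> (h \<otimes> k \<otimes> a \<otimes> inv (h \<otimes> k)) = \<phi> a" if a: "a \<in> M" for a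
    proof -
      have "h \<otimes> k \<otimes> a \<otimes> inv (h \<otimes> k) = h \<otimes> (k \<otimes> a \<otimes> inv k) \<otimes> inv h"
        using hH kH a MH HG by (simp add: subset_iff m_assoc inv_mult_group)
      then show ?thesis using fix_h[OF conj[OF kH a]] fix_k[OF a] by simp
    qed
    then show "h \<otimes> k \<in> stab G H M \<phi>"
      unfolding stab_def using subgroup.m_closed[OF H hH kH] by blast
  qed
qed

lemma subset_stab:
  assumes H: "subgroup H G" and M: "normal M (G\<lparr>carrier := H\<rparr>)"
    and \<phi>: "linear_char G M \<phi>"
  shows "M \<subseteq> stab G H M \<phi>"
proof
  fix b assume b: "b \<in> M"
  have MG: "subgroup M G" and MH: "M \<subseteq> H"
    using M unfolding normal_in_subgroup_iff[OF H] by auto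
  have bG: "b \<in> carrier G" using subgroup.mem_carrier[OF MG b] .
  have ib: "inv b \<in> M" using subgroup.m_inv_closed[OF MG b] .
  have "\<phi> b * \<phi> (inv b) = \<phi> (b \<otimes> inv b)" using \<phi> b ib unfolding linear_char_def by simp
  then have inverse: "\<phi> b * \<phi> (inv b) = 1" using bG linear_char_one[OF MG \<phi>] by simp
  have "\<phi> (b \<otimes> a \<otimes> inv b) = \<phi> a" if a: "a \<in> M" for a
  proof -
    have "\<phi> (b \<otimes> a \<otimes> inv b) = \<phi> b * \<phi> a * \<phi> (inv b)"
      using \<phi> a b ib subgroup.m_closed[OF MG b a] unfolding linear_char_def by metis
    also have "\<dots> = \<phi> a" using inverse by (simp add: algebra_simps)
    finally show ?thesis .
  qed
  then show "b \<in> stab G H M \<phi>" unfolding stab_def using b MH by blast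
qed

lemma normal_in_stab:
  assumes H: "subgroup H G" and M: "normal M (G\<lparr>carrier := H\<rparr>)"
    and \<phi>: "linear_char G M \<phi>"
  shows "normal M (G\<lparr>carrier := stab G H M \<phi>\<rparr>)"
proof -
  have "stab G H M \<phi> \<subseteq> H" unfolding stab_def by blast
  then show ?thesis
    using M subset_stab[OF H M \<phi>]
    unfolding normal_in_subgroup_iff[OF subgroup_stab[OF H M]] normal_in_subgroup_iff[OF H]
    by (meson subsetD)
qed

lemma N_lin_triple_root:
  assumes N: "normal N G"
  shows "N_lin_triple G N (carrier G, N, one_char N)"
proof -
  have NG: "subgroup N G" using normal_imp_subgroup[OF N] .
  have conj: "\<And>x a. x \<in> carrier G \<Longrightarrow> a \<in> N \<Longrightarrow> x \<otimes> a \<otimes> inv x \<in> N"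
    using normal.inv_op_closed2[OF N] .
  have lin: "linear_char G N (one_char N)"
    unfolding linear_char_def one_char_def using subgroup.m_closed[OF NG] by simp
  have "normal N (G\<lparr>carrier := carrier G\<rparr>)"
    unfolding normal_in_subgroup_iff[OF subgroup_self] using NG subgroup.subset[OF NG] conj by blast
  then have "lin_triple G (carrier G, N, one_char N)"
    unfolding lin_triple_def using subgroup_self lin conj by (simp add: one_char_def)
  moreover have "lin_ker N (one_char N) = N" unfolding lin_ker_def one_char_def by simp
  ultimately show ?thesis
    unfolding N_lin_triple_def using char_ker_induced[OF NG lin] normal_core_normal[OF N] by simp
qed

lemma N_lin_triple_Cl:
  assumes Acal: "Acal_ok G Acal" and Rep: "Rep_ok G Acal Rep"
    and u: "N_lin_triple G N u" and v: "v \<in> Cl G Acal Rep u"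
  shows "N_lin_triple G N v"
proof -
  obtain H A \<theta> where u_def: "u = (H, A, \<theta>)" by (cases u) auto
  have lin_u: "lin_triple G u" and ker_u: "char_ker G (induced G A \<theta>) = N"
    using u unfolding N_lin_triple_def u_def by auto
  have H: "subgroup H G" using lin_u unfolding lin_triple_def u_def by simp
  obtain \<phi> where "\<phi> \<in> Rep u" and v_def: "v = (stab G H (Acal u) \<phi>, Acal u, \<phi>)"
    using v unfolding Cl_def u_def by (auto split: if_splits)
  then have "\<phi> \<in> Lin_tilde G Acal u" using Rep lin_u unfolding Rep_ok_def by blast
  then have \<phi>: "linear_char G (Acal u) \<phi>"
    and ker_v: "char_ker G (induced G (Acal u) \<phi>) = char_ker G (induced G A \<theta>)"
    unfolding Lin_tilde_def u_def by auto
  have "A_cand G u (Acal u)" using Acal lin_u unfolding Acal_ok_def by blast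
  then have M: "normal (Acal u) (G\<lparr>carrier := H\<rparr>)" unfolding A_cand_def u_def by simp
  have "lin_triple G v"
    unfolding v_def lin_triple_def
    using subgroup_stab[OF H M] normal_in_stab[OF H M \<phi>] \<phi> unfolding stab_def by auto
  then show ?thesis unfolding N_lin_triple_def v_def using ker_v ker_u by simp
qed

lemma N_lin_triple_graph_vertex:
  assumes N: "normal N G" and Acal: "Acal_ok G Acal" and Rep: "Rep_ok G Acal Rep"
    and v: "v \<in> graph_vertices G Acal Rep N"
  shows "N_lin_triple G N v"
  using v
proof induction
  case root
  show ?case using N_lin_triple_root[OF N] .
next
  case (step u v)
  then show ?case using N_lin_triple_Cl[OF Acal Rep] by blast
qed

lemma char_ker_induced_L_set:
  assumes N: "normal N G" and Acal: "Acal_ok G Acal" and Rep: "Rep_ok G Acal Rep"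
    and L: "(H, H, \<theta>) \<in> L_set G Acal Rep N"
    and \<psi>: "linear_char G H \<psi>" and ker: "lin_ker H \<psi> = lin_ker H \<theta>"
  shows "subgroup H G" and "char_ker G (induced G H \<psi>) = N"
proof -
  have "N_lin_triple G N (H, H, \<theta>)"
    using N_lin_triple_graph_vertex[OF N Acal Rep] L unfolding L_set_def by simp
  then have H: "subgroup H G" and \<theta>: "linear_char G H \<theta>"
    and ker_\<theta>: "char_ker G (induced G H \<theta>) = N"
    unfolding N_lin_triple_def lin_triple_def by auto
  show "subgroup H G" using H .
  show "char_ker G (induced G H \<psi>) = N"
    using char_ker_induced[OF H \<psi>] char_ker_induced[OF H \<theta>] ker ker_\<theta> by simp
qed

end

section \<open>Automorphisms of subfields of the complex numbers\<close>

lemma is_subfield_gen_field: "is_subfield (gen_field S)"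
  unfolding is_subfield_def gen_field_def by (auto simp: is_subfield_def)

lemma gen_field_superset: "S \<subseteq> gen_field S"
  unfolding gen_field_def by blast

lemma gen_field_least: "is_subfield E \<Longrightarrow> S \<subseteq> E \<Longrightarrow> gen_field S \<subseteq> E"
  unfolding gen_field_def by blast

lemma of_nat_in_subfield: "is_subfield F \<Longrightarrow> of_nat k \<in> F"
proof (induction k)
  case 0
  then show ?case unfolding is_subfield_def by simp
next
  case (Suc k)
  then have "of_nat k + 1 \<in> F" unfolding is_subfield_def by blast
  then show ?case by (simp add: add.commute)
qed

lemma of_int_in_subfield:
  assumes F: "is_subfield F"
  shows "of_int k \<in> F"
proof (cases "k \<ge> 0")
  case True
  then show ?thesis using of_nat_in_subfield[OF F, of "nat k"] by simp
next
  case False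
  have "0 - of_nat (nat (- k)) \<in> F"
    using of_nat_in_subfield[OF F] F unfolding is_subfield_def by blast
  then show ?thesis using False by simp
qed

lemma field_aut_restrict_id:
  assumes F: "is_subfield F"
  shows "field_aut F (restrict id F)"
  unfolding field_aut_def
proof (intro conjI ballI)
  have "bij_betw id F F" by simp
  then show "bij_betw (restrict id F) F F" by (rule bij_betw_cong[THEN iffD1, rotated]) simp
  show "restrict id F 1 = 1" using F unfolding is_subfield_def by simp
  fix x y assume "x \<in> F" "y \<in> F"
  moreover have "x + y \<in> F" "x * y \<in> F" using F calculation unfolding is_subfield_def by auto
  ultimately show "restrict id F (x + y) = restrict id F x + restrict id F y"
    and "restrict id F (x * y) = restrict id F x * restrict id F y" by auto
qed simp

locale subfield_aut =
  fixes F :: "complex set" and \<sigma> :: "complex \<Rightarrow> complex"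
  assumes subfield: "is_subfield F" and aut: "field_aut F \<sigma>"
begin

lemma add: "x \<in> F \<Longrightarrow> y \<in> F \<Longrightarrow> \<sigma> (x + y) = \<sigma> x + \<sigma> y"
  and mult: "x \<in> F \<Longrightarrow> y \<in> F \<Longrightarrow> \<sigma> (x * y) = \<sigma> x * \<sigma> y"
  and one: "\<sigma> 1 = 1"
  using aut unfolding field_aut_def by blast+

lemma zero_mem: "0 \<in> F" and one_mem: "1 \<in> F"
  and add_mem: "x \<in> F \<Longrightarrow> y \<in> F \<Longrightarrow> x + y \<in> F"
  and diff_mem: "x \<in> F \<Longrightarrow> y \<in> F \<Longrightarrow> x - y \<in> F"
  and mult_mem: "x \<in> F \<Longrightarrow> y \<in> F \<Longrightarrow> x * y \<in> F"
  and inverse_mem: "x \<in> F \<Longrightarrow> inverse x \<in> F"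
  using subfield unfolding is_subfield_def by blast+

lemma zero: "\<sigma> 0 = 0"
  using add[OF zero_mem zero_mem] by simp

lemma diff: "x \<in> F \<Longrightarrow> y \<in> F \<Longrightarrow> \<sigma> (x - y) = \<sigma> x - \<sigma> y"
  using add[OF diff_mem] by (metis add_diff_cancel diff_add_cancel)

lemma of_nat: "\<sigma> (of_nat k) = of_nat k"
proof (induction k)
  case (Suc k)
  then show ?case
    using add[OF of_nat_in_subfield[OF subfield] one_mem] one by (simp add: add.commute)
qed (simp add: zero)

lemma of_int: "\<sigma> (of_int k) = of_int k"
proof (cases "k \<ge> 0")
  case True
  then show ?thesis using of_nat[of "nat k"] by simp
next
  case False
  have "\<sigma> (0 - of_nat (nat (- k))) = \<sigma> 0 - \<sigma> (of_nat (nat (- k)))"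
    by (rule diff[OF zero_mem of_nat_in_subfield[OF subfield]])
  then show ?thesis using False zero of_nat[of "nat (- k)"] by simp
qed

lemma inverse: "x \<in> F \<Longrightarrow> \<sigma> (inverse x) = inverse (\<sigma> x)"
proof (cases "x = 0")
  case False
  assume x: "x \<in> F"
  have "\<sigma> x * \<sigma> (inverse x) = 1" using mult[OF x inverse_mem[OF x]] False one by simp
  then show ?thesis by (metis inverse_unique)
qed (simp add: zero)

lemma divide: "x \<in> F \<Longrightarrow> y \<in> F \<Longrightarrow> \<sigma> (x / y) = \<sigma> x / \<sigma> y"
  unfolding divide_inverse using mult inverse_mem inverse by simp

lemma poly_of_int_poly:
  assumes x: "x \<in> F"
  shows "poly (of_int_poly p) x \<in> F \<and> \<sigma> (poly (of_int_poly p) x) = poly (of_int_poly p) (\<sigma> x)"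
proof (induction p rule: pCons_induct)
  case 0
  then show ?case using zero_mem zero by simp
next
  case (pCons a p)
  have "of_int_poly (pCons a p) = pCons (of_int a :: complex) (of_int_poly p)"
    by (rule Polynomial.map_poly_pCons) simp
  then have eq: "poly (of_int_poly (pCons a p)) z = of_int a + z * poly (of_int_poly p) z"
    for z :: complex
    by simp
  have "x * poly (of_int_poly p) x \<in> F" using mult_mem[OF x] pCons.IH by blast
  then show ?case
    unfolding eq using add_mem add mult[OF x] pCons.IH of_int_in_subfield[OF subfield] of_int
    by simp
qed

end

lemma field_aut_gen_field_eqI:
  assumes \<sigma>: "field_aut (gen_field S) \<sigma>" and \<tau>: "field_aut (gen_field S) \<tau>"
    and agree: "\<And>s. s \<in> S \<Longrightarrow> \<sigma> s = \<tau> s"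
  shows "\<sigma> = \<tau>"
proof
  fix z
  interpret s: subfield_aut "gen_field S" \<sigma> using \<sigma> is_subfield_gen_field by unfold_locales
  interpret t: subfield_aut "gen_field S" \<tau> using \<tau> is_subfield_gen_field by unfold_locales
  have "is_subfield {z \<in> gen_field S. \<sigma> z = \<tau> z}"
    unfolding is_subfield_def
    using s.zero_mem s.one_mem s.zero t.zero s.one t.one s.add t.add s.diff t.diff s.mult t.mult
      s.inverse t.inverse s.add_mem s.diff_mem s.mult_mem s.inverse_mem by auto
  then have "gen_field S \<subseteq> {z \<in> gen_field S. \<sigma> z = \<tau> z}"
    using agree gen_field_superset gen_field_least by blast
  moreover have "\<sigma> \<in> extensional (gen_field S)" "\<tau> \<in> extensional (gen_field S)"
    using \<sigma> \<tau> unfolding field_aut_def by auto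
  ultimately show "\<sigma> z = \<tau> z" unfolding extensional_def by (cases "z \<in> gen_field S") auto
qed

lemma finite_field_aut_gen_field:
  assumes S: "finite S"
    and finitely_many_values: "\<forall>s\<in>S. \<exists>R. finite R \<and> (\<forall>\<sigma>. field_aut (gen_field S) \<sigma> \<longrightarrow> \<sigma> s \<in> R)"
  shows "finite {\<sigma>. field_aut (gen_field S) \<sigma>}"
proof -
  obtain R where R: "\<And>s. s \<in> S \<Longrightarrow> finite (R s)"
    and in_R: "\<And>s \<sigma>. s \<in> S \<Longrightarrow> field_aut (gen_field S) \<sigma> \<Longrightarrow> \<sigma> s \<in> R s"
    using bchoice[OF finitely_many_values] by metis
  have "inj_on (\<lambda>\<sigma>. restrict \<sigma> S) {\<sigma>. field_aut (gen_field S) \<sigma>}"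
    by (rule inj_onI) (metis field_aut_gen_field_eqI mem_Collect_eq restrict_apply')
  moreover have "(\<lambda>\<sigma>. restrict \<sigma> S) ` {\<sigma>. field_aut (gen_field S) \<sigma>} \<subseteq> PiE S R"
    using in_R by auto
  moreover have "finite (PiE S R)" using S R by (rule finite_PiE)
  ultimately show ?thesis by (meson finite_imageD finite_subset)
qed

section \<open>Eigenvalues of integer matrices\<close>

abbreviation complex_of_int_mat :: "int mat \<Rightarrow> complex mat" where
  "complex_of_int_mat \<equiv> of_int_hom.mat_hom"

lemma eigenvalue_norm_le_row_sum:
  fixes A :: "complex mat"
  assumes A: "A \<in> carrier_mat n n"
    and rows: "\<And>i. i < n \<Longrightarrow> (\<Sum>j<n. cmod (A $$ (i, j))) \<le> c"
    and "eigenvalue A l"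
  shows "cmod l \<le> c"
proof -
  obtain v where v: "v \<in> carrier_vec n" "v \<noteq> 0\<^sub>v n" "A *\<^sub>v v = l \<cdot>\<^sub>v v"
    using assms(3) A unfolding eigenvalue_def eigenvector_def by auto
  have dim: "dim_vec v = n" using v(1) by simp
  obtain i where i: "i < n" "v $ i \<noteq> 0"
    using v(2) dim by (metis eq_vecI index_zero_vec(1,2))
  define m where "m = Max ((\<lambda>j. cmod (v $ j)) ` {..<n})"
  have le_m: "cmod (v $ j) \<le> m" if "j < n" for j unfolding m_def using that by simp
  obtain i0 where i0: "i0 < n" "cmod (v $ i0) = m"
    using Max_in[of "(\<lambda>j. cmod (v $ j)) ` {..<n}"] i(1) unfolding m_def by fastforce
  have m_pos: "m > 0" using le_m[OF i(1)] i(2) by (smt (verit) norm_le_zero_iff)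
  have "l * v $ i0 = (\<Sum>j<n. A $$ (i0, j) * v $ j)"
    using arg_cong[OF v(3), of "\<lambda>w. w $ i0"] A i0(1) dim
    by (simp add: scalar_prod_def atLeast0LessThan)
  then have "cmod l * m = cmod (\<Sum>j<n. A $$ (i0, j) * v $ j)" using i0(2) by (metis norm_mult)
  also have "\<dots> \<le> (\<Sum>j<n. cmod (A $$ (i0, j)) * m)"
    by (rule order_trans[OF norm_sum sum_mono])
      (simp add: norm_mult le_m mult_left_mono)
  also have "\<dots> \<le> c * m"
    using rows[OF i0(1)] m_pos by (simp add: sum_distrib_right[symmetric] mult_right_mono)
  finally show ?thesis using m_pos by simp
qed

lemma char_poly_of_int_mat:
  assumes "M \<in> carrier_mat n n"
  shows "char_poly (complex_of_int_mat M) = of_int_poly (char_poly M)"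
    and "of_int_poly (char_poly M) \<noteq> (0 :: complex poly)"
proof -
  show "char_poly (complex_of_int_mat M) = of_int_poly (char_poly M)"
    by (rule of_int_hom.char_poly_hom[OF assms])
  have "coeff (char_poly M) n = 1" using degree_monic_char_poly[OF assms] by simp
  then show "of_int_poly (char_poly M) \<noteq> (0 :: complex poly)"
    by (auto simp: map_poly_eq_0_iff)
qed

lemma finite_eigenvalues_of_int_mat:
  assumes M: "M \<in> carrier_mat n n"
  shows "finite {z. eigenvalue (complex_of_int_mat M) z}"
  using poly_roots_finite[OF char_poly_of_int_mat(2)[OF M]]
    eigenvalue_root_char_poly[of "complex_of_int_mat M" n] M char_poly_of_int_mat(1)[OF M]
  by simp

lemma (in subfield_aut) eigenvalue_of_int_mat:
  assumes M: "M \<in> carrier_mat n n" and "\<beta> \<in> F"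
    and "eigenvalue (complex_of_int_mat M) \<beta>"
  shows "eigenvalue (complex_of_int_mat M) (\<sigma> \<beta>)"
  using assms poly_of_int_poly[of \<beta> "char_poly M"] zero char_poly_of_int_mat(1)[OF M]
    eigenvalue_root_char_poly[of "complex_of_int_mat M" n]
  by simp

section \<open>Galois conjugates of induced characters\<close>

context finite_group
begin

lemma induced_eigen_equation:
  assumes H: "subgroup H G" and \<psi>: "linear_char G H \<psi>" and g: "g \<in> carrier G"
    and h: "h \<in> H"
  shows "(\<Sum>z\<in>H. of_nat (card {x \<in> carrier G. h \<otimes> (x \<otimes> g \<otimes> inv x) = z}) * \<psi> z)
    = \<psi> h * (of_nat (card H) * induced G H \<psi> g)"
proof -
  define y where "y x = x \<otimes> g \<otimes> inv x" for x
  define S where "S = {x \<in> carrier G. h \<otimes> y x \<in> H}"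
  have finH: "finite H" using finite_carrier subgroup.subset[OF H] finite_subset by blast
  have hG: "h \<in> carrier G" using subgroup.mem_carrier[OF H h] .
  have "(\<Sum>z\<in>H. of_nat (card {x \<in> carrier G. h \<otimes> y x = z}) * \<psi> z)
      = (\<Sum>z\<in>H. \<Sum>x\<in>{x. x \<in> S \<and> h \<otimes> y x = z}. \<psi> (h \<otimes> y x))"
  proof (rule sum.cong[OF refl])
    fix z assume "z \<in> H"
    then have "{x. x \<in> S \<and> h \<otimes> y x = z} = {x \<in> carrier G. h \<otimes> y x = z}"
      unfolding S_def by auto
    then show "of_nat (card {x \<in> carrier G. h \<otimes> y x = z}) * \<psi> z
        = (\<Sum>x\<in>{x. x \<in> S \<and> h \<otimes> y x = z}. \<psi> (h \<otimes> y x))"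
      by simp
  qed
  also have "\<dots> = (\<Sum>x\<in>S. \<psi> (h \<otimes> y x))"
    by (rule sum.group) (auto simp: S_def finite_carrier finH)
  also have "\<dots> = (\<Sum>x\<in>carrier G. \<psi> (h \<otimes> y x))"
    using \<psi> unfolding S_def linear_char_def
    by (intro sum.mono_neutral_left) (auto simp: finite_carrier)
  also have "\<dots> = (\<Sum>x\<in>carrier G. \<psi> h * \<psi> (y x))"
  proof (rule sum.cong[OF refl])
    fix x assume x: "x \<in> carrier G"
    then have yG: "y x \<in> carrier G" unfolding y_def using g by simp
    show "\<psi> (h \<otimes> y x) = \<psi> h * \<psi> (y x)"
    proof (cases "y x \<in> H")
      case True
      then show ?thesis using \<psi> h unfolding linear_char_def by blast
    next
      case False
      have "inv h \<otimes> (h \<otimes> y x) = y x" using hG yG by (simp add: m_assoc[symmetric])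
      then have "h \<otimes> y x \<notin> H"
        using False subgroup.m_closed[OF H subgroup.m_inv_closed[OF H h]] by metis
      then show ?thesis using False \<psi> unfolding linear_char_def by simp
    qed
  qed
  also have "\<dots> = \<psi> h * (of_nat (card H) * induced G H \<psi> g)"
    unfolding card_mult_induced[OF H g] y_def by (simp add: sum_distrib_left)
  finally show ?thesis unfolding y_def .
qed

lemma induced_row_sum_le:
  assumes H: "subgroup H G"
  shows "(\<Sum>z\<in>H. card {x \<in> carrier G. h \<otimes> (x \<otimes> g \<otimes> inv x) = z}) \<le> card (carrier G)"
proof -
  define S where "S = {x \<in> carrier G. h \<otimes> (x \<otimes> g \<otimes> inv x) \<in> H}"
  have finH: "finite H" using finite_carrier subgroup.subset[OF H] finite_subset by blast
  have "(\<Sum>z\<in>H. card {x \<in> carrier G. h \<otimes> (x \<otimes> g \<otimes> inv x) = z})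
      = (\<Sum>z\<in>H. \<Sum>x\<in>{x. x \<in> S \<and> h \<otimes> (x \<otimes> g \<otimes> inv x) = z}. 1)"
    unfolding S_def by (intro sum.cong) (auto intro: arg_cong[where f = card])
  also have "\<dots> = card S"
    by (subst sum.group) (auto simp: S_def finite_carrier finH)
  also have "\<dots> \<le> card (carrier G)" unfolding S_def by (rule card_mono[OF finite_carrier]) blast
  finally show ?thesis .
qed

lemma card_mult_induced_eigenvalue:
  assumes H: "subgroup H G" and \<psi>: "linear_char G H \<psi>" and g: "g \<in> carrier G"
  obtains n and M :: "int mat" where "M \<in> carrier_mat n n"
    and "\<And>i. i < n \<Longrightarrow>
      (\<Sum>j<n. cmod (complex_of_int_mat M $$ (i, j))) \<le> real (card (carrier G))"
    and "eigenvalue (complex_of_int_mat M) (of_nat (card H) * induced G H \<psi> g)"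
proof -
  have finH: "finite H" using finite_carrier subgroup.subset[OF H] finite_subset by blast
  define n where "n = card H"
  obtain e where e: "bij_betw e {0..<n} H" using ex_bij_betw_nat_finite[OF finH] n_def by blast
  have eH: "e i \<in> H" if "i < n" for i using e that unfolding bij_betw_def by auto
  have n_pos: "n > 0" unfolding n_def by (rule subgroup.finite_imp_card_positive[OF H finite_carrier])
  have reindex: "(\<Sum>j<n. f (e j)) = (\<Sum>z\<in>H. f z)" for f :: "'a \<Rightarrow> 'b::comm_monoid_add"
    using sum.reindex_bij_betw[OF e, of f] by (simp add: atLeast0LessThan)
  define K where "K h z = card {x \<in> carrier G. h \<otimes> (x \<otimes> g \<otimes> inv x) = z}" for h z
  define M :: "int mat" where "M = mat n n (\<lambda>(i, j). int (K (e i) (e j)))"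
  define A :: "complex mat" where "A = complex_of_int_mat M"
  have M: "M \<in> carrier_mat n n" and A: "A \<in> carrier_mat n n" unfolding A_def M_def by auto
  have A_entry: "A $$ (i, j) = of_nat (K (e i) (e j))" if "i < n" "j < n" for i j
    using that unfolding A_def M_def by simp
  show ?thesis
  proof (rule that[OF M, folded A_def])
    fix i assume i: "i < n"
    have "(\<Sum>j<n. cmod (A $$ (i, j))) = (\<Sum>j<n. real (K (e i) (e j)))"
      using A_entry[OF i] by (intro sum.cong) auto
    also have "\<dots> = (\<Sum>z\<in>H. real (K (e i) z))" by (rule reindex)
    also have "\<dots> = real (\<Sum>z\<in>H. K (e i) z)" by simp
    also have "\<dots> \<le> real (card (carrier G))"
      unfolding K_def of_nat_le_iff by (rule induced_row_sum_le[OF H])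
    finally show "(\<Sum>j<n. cmod (A $$ (i, j))) \<le> real (card (carrier G))" .
  next
    define \<beta> where "\<beta> = of_nat (card H) * induced G H \<psi> g"
    define v where "v = vec n (\<lambda>i. \<psi> (e i))"
    have "v $ 0 \<noteq> 0" using n_pos eH \<psi> unfolding v_def linear_char_def by simp
    then have "v \<noteq> 0\<^sub>v n" using n_pos by (metis index_zero_vec(1))
    moreover have "A *\<^sub>v v = \<beta> \<cdot>\<^sub>v v"
    proof (rule eq_vecI)
      show "dim_vec (A *\<^sub>v v) = dim_vec (\<beta> \<cdot>\<^sub>v v)" using A unfolding v_def by simp
      fix i assume "i < dim_vec (\<beta> \<cdot>\<^sub>v v)"
      then have i: "i < n" unfolding v_def by simp
      have "(A *\<^sub>v v) $ i = (\<Sum>j<n. A $$ (i, j) * v $ j)"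
        using A i unfolding v_def by (simp add: scalar_prod_def atLeast0LessThan)
      also have "\<dots> = (\<Sum>j<n. of_nat (K (e i) (e j)) * \<psi> (e j))"
        using A_entry[OF i] unfolding v_def by (intro sum.cong) auto
      also have "\<dots> = (\<Sum>z\<in>H. of_nat (K (e i) z) * \<psi> z)" by (rule reindex)
      also have "\<dots> = \<psi> (e i) * \<beta>"
        unfolding K_def \<beta>_def by (rule induced_eigen_equation[OF H \<psi> g eH[OF i]])
      finally show "(A *\<^sub>v v) $ i = (\<beta> \<cdot>\<^sub>v v) $ i"
        using i unfolding v_def by (simp add: mult.commute)
    qed
    moreover have "v \<in> carrier_vec (dim_row A)" using A unfolding v_def by simp
    ultimately have "eigenvector A v \<beta>" unfolding eigenvector_def using A by simp
    then show "eigenvalue A (of_nat (card H) * induced G H \<psi> g)"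
      unfolding eigenvalue_def \<beta>_def by blast
  qed
qed

lemma char_gal_induced_eigenvalue:
  assumes H: "subgroup H G" and \<psi>: "linear_char G H \<psi>" and g: "g \<in> carrier G"
  obtains n and M :: "int mat" where "M \<in> carrier_mat n n"
    and "\<And>i. i < n \<Longrightarrow>
      (\<Sum>j<n. cmod (complex_of_int_mat M $$ (i, j))) \<le> real (card (carrier G))"
    and "\<And>\<sigma>. \<sigma> \<in> char_gal G (induced G H \<psi>) \<Longrightarrow>
      eigenvalue (complex_of_int_mat M) (of_nat (card H) * \<sigma> (induced G H \<psi> g))"
proof -
  obtain n and M :: "int mat" where M: "M \<in> carrier_mat n n"
    and rows: "\<And>i. i < n \<Longrightarrow>
      (\<Sum>j<n. cmod (complex_of_int_mat M $$ (i, j))) \<le> real (card (carrier G))"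
    and ev: "eigenvalue (complex_of_int_mat M) (of_nat (card H) * induced G H \<psi> g)"
    using card_mult_induced_eigenvalue[OF H \<psi> g] by blast
  have "eigenvalue (complex_of_int_mat M) (of_nat (card H) * \<sigma> (induced G H \<psi> g))"
    if \<sigma>: "\<sigma> \<in> char_gal G (induced G H \<psi>)" for \<sigma>
  proof -
    interpret subfield_aut "gen_field (induced G H \<psi> ` carrier G)" \<sigma>
      using \<sigma> is_subfield_gen_field unfolding char_gal_def by unfold_locales auto
    have val: "induced G H \<psi> g \<in> gen_field (induced G H \<psi> ` carrier G)"
      using g gen_field_superset by blast
    have card: "of_nat (card H) \<in> gen_field (induced G H \<psi> ` carrier G)"
      using of_nat_in_subfield[OF subfield] .
    show ?thesis
      using eigenvalue_of_int_mat[OF M mult_mem[OF card val] ev] mult[OF card val] of_nat by simp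
  qed
  then show ?thesis using that[OF M rows] by blast
qed

lemma norm_char_gal_induced_le:
  assumes H: "subgroup H G" and \<psi>: "linear_char G H \<psi>" and g: "g \<in> carrier G"
    and \<sigma>: "\<sigma> \<in> char_gal G (induced G H \<psi>)"
  shows "cmod (\<sigma> (induced G H \<psi> g)) \<le> real (card (carrier G)) / real (card H)"
proof -
  obtain n and M :: "int mat" where M: "M \<in> carrier_mat n n"
    and rows: "\<And>i. i < n \<Longrightarrow>
      (\<Sum>j<n. cmod (complex_of_int_mat M $$ (i, j))) \<le> real (card (carrier G))"
    and ev: "eigenvalue (complex_of_int_mat M) (of_nat (card H) * \<sigma> (induced G H \<psi> g))"
    using char_gal_induced_eigenvalue[OF H \<psi> g] \<sigma> by metis
  have "cmod (of_nat (card H) * \<sigma> (induced G H \<psi> g)) \<le> real (card (carrier G))"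
    using eigenvalue_norm_le_row_sum[OF _ rows ev] M by simp
  then show ?thesis
    using subgroup.finite_imp_card_positive[OF H finite_carrier]
    by (simp add: norm_mult field_simps)
qed

lemma finite_char_gal_induced:
  assumes H: "subgroup H G" and \<psi>: "linear_char G H \<psi>"
  shows "finite (char_gal G (induced G H \<psi>))"
  unfolding char_gal_def
proof (rule finite_field_aut_gen_field)
  show "finite (induced G H \<psi> ` carrier G)" using finite_carrier by simp
  show "\<forall>s\<in>induced G H \<psi> ` carrier G. \<exists>R. finite R \<and>
      (\<forall>\<sigma>. field_aut (gen_field (induced G H \<psi> ` carrier G)) \<sigma> \<longrightarrow> \<sigma> s \<in> R)"
  proof
    fix s assume "s \<in> induced G H \<psi> ` carrier G"
    then obtain g where g: "g \<in> carrier G" and s: "s = induced G H \<psi> g" by blast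
    obtain n and M :: "int mat" where M: "M \<in> carrier_mat n n"
      and ev: "\<And>\<sigma>. \<sigma> \<in> char_gal G (induced G H \<psi>) \<Longrightarrow>
        eigenvalue (complex_of_int_mat M) (of_nat (card H) * \<sigma> (induced G H \<psi> g))"
      using char_gal_induced_eigenvalue[OF H \<psi> g] by metis
    define R where "R = (\<lambda>z. z / of_nat (card H)) ` {z. eigenvalue (complex_of_int_mat M) z}"
    have "\<sigma> s \<in> R" if "field_aut (gen_field (induced G H \<psi> ` carrier G)) \<sigma>" for \<sigma>
    proof -
      have "of_nat (card H) \<noteq> (0 :: complex)"
        using subgroup.finite_imp_card_positive[OF H finite_carrier] by simp
      then have "\<sigma> s = (of_nat (card H) * \<sigma> s) / of_nat (card H)" by simp
      then show ?thesis
        using ev[of \<sigma>] that unfolding R_def char_gal_def s by blast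
    qed
    moreover have "finite R" unfolding R_def using finite_eigenvalues_of_int_mat[OF M] by simp
    ultimately show "\<exists>R. finite R \<and>
        (\<forall>\<sigma>. field_aut (gen_field (induced G H \<psi> ` carrier G)) \<sigma> \<longrightarrow> \<sigma> s \<in> R)"
      by blast
  qed
qed

lemma char_ker_induced_eQ:
  assumes H: "subgroup H G" and \<psi>: "linear_char G H \<psi>"
  shows "char_ker G (induced G H \<psi>) =
    {g \<in> carrier G. eQ G (induced G H \<psi>) (inv g) = eQ G (induced G H \<psi>) \<one>}"
proof -
  define \<chi> where "\<chi> = induced G H \<psi>"
  define F where "F = gen_field (\<chi> ` carrier G)"
  define Gal where "Gal = char_gal G \<chi>"
  define d where "d = real (card (carrier G)) / real (card H)"
  have card_H: "card H > 0" using subgroup.finite_imp_card_positive[OF H finite_carrier] .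
  have card_G: "card (carrier G) > 0" using finite_carrier one_closed card_gt_0_iff by blast
  have \<chi>_one: "\<chi> \<one> = of_nat (card (carrier G)) / of_nat (card H)"
    using card_mult_induced_one[OF H \<psi>] card_H unfolding \<chi>_def by (simp add: field_simps)
  then have \<chi>_one_real: "\<chi> \<one> = of_real d" unfolding d_def by simp
  have fixes_\<chi>_one: "\<sigma> (\<chi> \<one>) = \<chi> \<one>" if "\<sigma> \<in> Gal" for \<sigma>
  proof -
    interpret subfield_aut F \<sigma>
      using that is_subfield_gen_field unfolding Gal_def char_gal_def F_def by unfold_locales auto
    show ?thesis unfolding \<chi>_one using divide[OF of_nat_in_subfield[OF subfield]
        of_nat_in_subfield[OF subfield]] of_nat by simp
  qed
  define k where "k = \<chi> \<one> / of_nat (card (carrier G))"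
  have k: "k \<noteq> 0" unfolding k_def \<chi>_one using card_H card_G by simp
  have eQ_inv: "eQ G \<chi> (inv g) = k * (\<Sum>\<sigma>\<in>Gal. \<sigma> (\<chi> g))" if "g \<in> carrier G" for g
    using that unfolding eQ_def k_def Gal_def by simp
  have Gal_sum_one: "(\<Sum>\<sigma>\<in>Gal. \<sigma> (\<chi> \<one>)) = of_nat (card Gal) * of_real d"
    using fixes_\<chi>_one \<chi>_one_real by (simp add: sum.cong[OF refl, of Gal _ "\<lambda>_. \<chi> \<one>"])
  have eQ_one: "eQ G \<chi> \<one> = k * (of_nat (card Gal) * of_real d)"
    using eQ_inv[OF one_closed] Gal_sum_one by simp
  have "g \<in> char_ker G \<chi> \<longleftrightarrow> eQ G \<chi> (inv g) = eQ G \<chi> \<one>" if g: "g \<in> carrier G" for g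
  proof
    assume "g \<in> char_ker G \<chi>"
    then have "\<chi> g = \<chi> \<one>" unfolding char_ker_def by simp
    then show "eQ G \<chi> (inv g) = eQ G \<chi> \<one>"
      using eQ_inv[OF g] eQ_inv[OF one_closed] by simp
  next
    assume "eQ G \<chi> (inv g) = eQ G \<chi> \<one>"
    then have "(\<Sum>\<sigma>\<in>Gal. \<sigma> (\<chi> g)) = of_nat (card Gal) * of_real d"
      using eQ_inv[OF g] eQ_one k by simp
    then have "\<forall>\<sigma>\<in>Gal. \<sigma> (\<chi> g) = of_real d"
      using sum_norm_bound_attained_imp_eq[of Gal "\<lambda>\<sigma>. \<sigma> (\<chi> g)" d]
        finite_char_gal_induced[OF H \<psi>] norm_char_gal_induced_le[OF H \<psi> g]
      unfolding Gal_def \<chi>_def d_def by blast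
    moreover have "restrict id F \<in> Gal"
      using field_aut_restrict_id[OF is_subfield_gen_field] unfolding Gal_def char_gal_def F_def by simp
    moreover have "\<chi> g \<in> F" using g gen_field_superset unfolding F_def by blast
    ultimately show "g \<in> char_ker G \<chi>" using g \<chi>_one_real unfolding char_ker_def by force
  qed
  then show ?thesis unfolding \<chi>_def char_ker_def by blast
qed

lemma N_eq_kernel_of_shoda_idem:
  assumes N: "normal N G" and Acal: "Acal_ok G Acal" and Rep: "Rep_ok G Acal Rep"
    and L: "(H, H, \<theta>) \<in> L_set G Acal Rep N" and e: "e \<in> shoda_idem G H (lin_ker H \<theta>)"
  shows "N = {g \<in> carrier G. e (inv g) = e \<one>}"
proof -
  obtain \<psi> where \<psi>: "linear_char G H \<psi>" and ker: "lin_ker H \<psi> = lin_ker H \<theta>"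
    and e_def: "e = eQ G (induced G H \<psi>)"
    using e unfolding shoda_idem_def by blast
  have H: "subgroup H G" and "char_ker G (induced G H \<psi>) = N"
    using char_ker_induced_L_set[OF N Acal Rep L \<psi> ker] by auto
  then show ?thesis using char_ker_induced_eQ[OF H \<psi>] e_def by simp
qed

end

theorem lemma4:
  fixes G :: "'a monoid"
    and Acal :: "'a triple \<Rightarrow> 'a set"
    and Rep :: "'a triple \<Rightarrow> ('a \<Rightarrow> complex) set"
  assumes "group G" and "finite (carrier G)" and "class_C G"
    and "normal N G" and "normal N' G" and "N \<noteq> N'"
    and "Acal_ok G Acal" and "Rep_ok G Acal Rep"
    and "(H, H, \<theta>) \<in> L_set G Acal Rep N"
    and "(H', H', \<theta>') \<in> L_set G Acal Rep N'"
  shows "shoda_idem G H (lin_ker H \<theta>) \<inter> shoda_idem G H' (lin_ker H' \<theta>') = {}"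
proof (rule equals0I)
  interpret finite_group G
    using assms(1,2) by (simp add: finite_group_def finite_group_axioms_def)
  fix e assume "e \<in> shoda_idem G H (lin_ker H \<theta>) \<inter> shoda_idem G H' (lin_ker H' \<theta>')"
  then have "N = {g \<in> carrier G. e (inv\<^bsub>G\<^esub> g) = e \<one>\<^bsub>G\<^esub>}"
    and "N' = {g \<in> carrier G. e (inv\<^bsub>G\<^esub> g) = e \<one>\<^bsub>G\<^esub>}"
    using N_eq_kernel_of_shoda_idem assms(4,5,7-10) by blast+
  then show False using assms(6) by simp
qed

end
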